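(* Let $k\ge1$, $\varepsilon>0$, and let $p,q\in\Delta([k]\times[k])$ have marginals $p_1,p_2$ and $q_1,q_2$ respectively. Then $$\|\mathcal T(p)-\mathcal T(q)\|_2^2=\frac{\alpha_H^4}{K^2}\|p-q\|_2^2+\frac{\alpha_H^2}{K^2}\big(\|p_1-q_1\|_2^2+\|p_2-q_2\|_2^2\big).$$ In particular, if $d_{TV}(p,q)>\gamma$ then $\|\mathcal T(p)-\mathcal T(q)\|_2>\frac{2\alpha_H^2\gamma}{Kk}$.
   Context: $d_{TV}(p,q)=\frac12\|p-q\|_1$. Hadamard Response (HR): let $K=2^{\lceil\log_2(k+1)\rceil}$ and let $H_K\in\{-1,1\}^{K\times K}$ be the Sylvester Hadamard matrix ($H_1=[1]$, $H_{2m}=\begin{bmatrix}H_m&H_m\\H_m&-H_m\end{bmatrix}$). Fix an injection $\phi:[k]\to\{2,\dots,K\}$ and set $C_x=\{z\in[K]:(H_K)_{\phi(x),z}=1\}$. On input $x\in[k]$, HR outputs $z\in[K]$ with probability $W(z\mid x)=\frac{2}{K}\cdot\frac{e^\varepsilon}{e^\varepsilon+1}$ if $z\in C_x$ and $\frac{2}{K}\cdot\frac{1}{e^\varepsilon+1}$ otherwise. $\alpha_H=(e^\varepsilon-1)/(e^\varepsilon+1)$. For $p\in\Delta([k]\times[k])$, $\mathcal T(p)\in\Delta([K]\times[K])$ is the distribution of $(Z_1,Z_2)$ where $(X_1,X_2)\sim p$ and $Z_1,Z_2$ are obtained by applying HR independently to $X_1$ and to $X_2$, i.e. $\mathcal T(p)(z_1,z_2)=\sum_{x_1,x_2}W(z_1\mid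 x_1)W(z_2\mid x_2)p(x_1,x_2)$. *)

theory Defs
  imports Complex_Main
begin

text \<open>Sylvester Hadamard matrix of size 2^m, with 0-based indices i, j < 2^m:
  H_1 = [1], H_{2n} = [[H_n, H_n], [H_n, -H_n]].\<close>
fun sylv0 :: "nat \<Rightarrow> nat \<Rightarrow> nat \<Rightarrow> int" where
  "sylv0 0 i j = 1"
| "sylv0 (Suc m) i j =
     (let h = 2 ^ m in
      if i < h then (if j < h then sylv0 m i j else sylv0 m i (j - h))
      else (if j < h then sylv0 m (i - h) j else - sylv0 m (i - h) (j - h)))"

text \<open>Entry (H_{2^m})_{i,j} with the paper's 1-based indices i, j in {1..2^m}.\<close>
definition hadamard :: "nat \<Rightarrow> nat \<Rightarrow> nat \<Rightarrow> int" where
  "hadamard m i j = sylv0 m (i - 1) (j - 1)"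

text \<open>K = 2^(ceil(log2(k+1))); we record the exponent.\<close>
definition HR_exp :: "nat \<Rightarrow> nat" where
  "HR_exp k = nat \<lceil>log 2 (real k + 1)\<rceil>"

definition HR_K :: "nat \<Rightarrow> nat" where
  "HR_K k = 2 ^ HR_exp k"

definition alpha_H :: "real \<Rightarrow> real" where
  "alpha_H eps = (exp eps - 1) / (exp eps + 1)"

definition HR_C :: "nat \<Rightarrow> (nat \<Rightarrow> nat) \<Rightarrow> nat \<Rightarrow> nat set" where
  "HR_C k \<phi> x = {z \<in> {1..HR_K k}. hadamard (HR_exp k) (\<phi> x) z = 1}"

definition HR_W :: "nat \<Rightarrow> real \<Rightarrow> (nat \<Rightarrow> nat) \<Rightarrow> nat \<Rightarrow> nat \<Rightarrow> real" where
  "HR_W k eps \<phi> z x =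
     (if z \<in> HR_C k \<phi> x then 2 / real (HR_K k) * (exp eps / (exp eps + 1))
      else 2 / real (HR_K k) * (1 / (exp eps + 1)))"

definition HR_T :: "nat \<Rightarrow> real \<Rightarrow> (nat \<Rightarrow> nat) \<Rightarrow> (nat \<times> nat \<Rightarrow> real) \<Rightarrow> nat \<times> nat \<Rightarrow> real" where
  "HR_T k eps \<phi> p = (\<lambda>(z1, z2). \<Sum>(x1, x2) \<in> {1..k} \<times> {1..k}.
       HR_W k eps \<phi> z1 x1 * HR_W k eps \<phi> z2 x2 * p (x1, x2))"

definition is_dist :: "'a set \<Rightarrow> ('a \<Rightarrow> real) \<Rightarrow> bool" where
  "is_dist A p \<longleftrightarrow> (\<forall>a\<in>A. 0 \<le> p a) \<and> (\<Sum>a\<in>A. p a) = 1"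

definition marg1 :: "nat \<Rightarrow> (nat \<times> nat \<Rightarrow> real) \<Rightarrow> nat \<Rightarrow> real" where
  "marg1 k p x = (\<Sum>y\<in>{1..k}. p (x, y))"

definition marg2 :: "nat \<Rightarrow> (nat \<times> nat \<Rightarrow> real) \<Rightarrow> nat \<Rightarrow> real" where
  "marg2 k p y = (\<Sum>x\<in>{1..k}. p (x, y))"

definition l2sq :: "'a set \<Rightarrow> ('a \<Rightarrow> real) \<Rightarrow> ('a \<Rightarrow> real) \<Rightarrow> real" where
  "l2sq A f g = (\<Sum>a\<in>A. (f a - g a)^2)"

definition l2dist :: "'a set \<Rightarrow> ('a \<Rightarrow> real) \<Rightarrow> ('a \<Rightarrow> real) \<Rightarrow> real" where
  "l2dist A f g = sqrt (l2sq A f g)"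

definition dTV :: "'a set \<Rightarrow> ('a \<Rightarrow> real) \<Rightarrow> ('a \<Rightarrow> real) \<Rightarrow> real" where
  "dTV A f g = (1/2) * (\<Sum>a\<in>A. \<bar>f a - g a\<bar>)"

end

theory Submission
  imports Defs "HOL-Analysis.Convex"
begin

(* Write W(z | x) = (1 + \<alpha>\<^sub>H H(\<phi> x, z)) / K. The rows \<phi> x are distinct Hadamard rows other
   than the all-ones row 1, so by orthogonality the Gram kernel of the channel is
   \<Sum>\<^sub>z W(z | a) W(z | b) = (1 + \<alpha>\<^sub>H\<^sup>2 [a = b]) / K.  Expanding
   \<parallel>T(p) - T(q)\<parallel>\<^sup>2 as a quadratic form of d = p - q with the tensor square of this kernel,
   the constant part is a multiple of (\<Sum> d)\<^sup>2 = 0, the two mixed parts give the squared distances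
   of the marginals and the diagonal part gives \<parallel>d\<parallel>\<^sup>2.  The TV bound then follows from
   Cauchy-Schwarz, 2 d_TV(p, q) \<le> k \<parallel>p - q\<parallel>\<^sub>2. *)

lemma sum_lessThan_double:
  fixes f :: "nat \<Rightarrow> 'a::comm_monoid_add"
  shows "(\<Sum>z<2 * h. f z) = (\<Sum>z<h. f z) + (\<Sum>z<h. f (z + h))"
proof -
  have "(\<Sum>z<2 * h. f z) = (\<Sum>z=0..<h. f z) + (\<Sum>z=h..<2 * h. f z)"
    by (simp add: sum.atLeastLessThan_concat flip: atLeast0LessThan)
  also have "(\<Sum>z=h..<2 * h. f z) = (\<Sum>z<h. f (z + h))"
    using sum.shift_bounds_nat_ivl[of f 0 h h] by (simp add: atLeast0LessThan mult_2)
  finally show ?thesis by (simp add: atLeast0LessThan)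
qed

lemma sum_sq_tensor_image:
  fixes W :: "'z \<Rightarrow> 'x \<Rightarrow> real" and d :: "'x \<Rightarrow> 'x \<Rightarrow> real"
  shows "(\<Sum>z1\<in>J. \<Sum>z2\<in>J. (\<Sum>a\<in>I. \<Sum>b\<in>I. W z1 a * W z2 b * d a b)\<^sup>2)
    = (\<Sum>a\<in>I. \<Sum>a'\<in>I. \<Sum>b\<in>I. \<Sum>b'\<in>I.
         d a b * d a' b' * (\<Sum>z\<in>J. W z a * W z a') * (\<Sum>z\<in>J. W z b * W z b'))"
proof -
  have swap: "(\<Sum>z1\<in>J. \<Sum>z2\<in>J. \<Sum>a\<in>I. f z1 z2 a) = (\<Sum>a\<in>I. \<Sum>z1\<in>J. \<Sum>z2\<in>J. f z1 z2 a)"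
    for f :: "'z \<Rightarrow> 'z \<Rightarrow> 'x \<Rightarrow> real"
    by (subst sum.swap) (intro sum.cong refl sum.swap)
  have "(\<Sum>z1\<in>J. \<Sum>z2\<in>J. (\<Sum>a\<in>I. \<Sum>b\<in>I. W z1 a * W z2 b * d a b)\<^sup>2)
      = (\<Sum>z1\<in>J. \<Sum>z2\<in>J. \<Sum>a\<in>I. \<Sum>a'\<in>I. \<Sum>b\<in>I. \<Sum>b'\<in>I.
           W z1 a * W z2 b * d a b * (W z1 a' * W z2 b' * d a' b'))"
    by (simp add: power2_eq_square sum_product)
  also have "\<dots> = (\<Sum>a\<in>I. \<Sum>a'\<in>I. \<Sum>b\<in>I. \<Sum>b'\<in>I. \<Sum>z1\<in>J. \<Sum>z2\<in>J.
      W z1 a * W z2 b * d a b * (W z1 a' * W z2 b' * d a' b'))"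
    by (simp only: swap)
  also have "\<dots> = (\<Sum>a\<in>I. \<Sum>a'\<in>I. \<Sum>b\<in>I. \<Sum>b'\<in>I.
      d a b * d a' b' * (\<Sum>z\<in>J. W z a * W z a') * (\<Sum>z\<in>J. W z b * W z b'))"
    by (intro sum.cong refl) (simp add: sum_product sum_distrib_left ac_simps)
  finally show ?thesis .
qed

lemma pair_sum_same_row:
  fixes d :: "'x \<Rightarrow> 'x \<Rightarrow> real" assumes "finite I"
  shows "(\<Sum>a\<in>I. \<Sum>a'\<in>I. \<Sum>b\<in>I. \<Sum>b'\<in>I. d a b * d a' b' * of_bool (a = a'))
      = (\<Sum>a\<in>I. (\<Sum>b\<in>I. d a b)\<^sup>2)"
proof -
  have "(\<Sum>a\<in>I. \<Sum>a'\<in>I. \<Sum>b\<in>I. \<Sum>b'\<in>I. d a b * d a' b' * of_bool (a = a'))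
      = (\<Sum>a\<in>I. \<Sum>a'\<in>I. if a = a' then \<Sum>b\<in>I. \<Sum>b'\<in>I. d a b * d a' b' else 0)"
    by (intro sum.cong refl) simp
  also have "\<dots> = (\<Sum>a\<in>I. (\<Sum>b\<in>I. d a b)\<^sup>2)"
    using assms by (simp add: sum.delta' power2_eq_square sum_product cong: sum.cong)
  finally show ?thesis .
qed

lemma pair_sum_same_column:
  fixes d :: "'x \<Rightarrow> 'x \<Rightarrow> real" assumes "finite I"
  shows "(\<Sum>a\<in>I. \<Sum>a'\<in>I. \<Sum>b\<in>I. \<Sum>b'\<in>I. d a b * d a' b' * of_bool (b = b'))
      = (\<Sum>b\<in>I. (\<Sum>a\<in>I. d a b)\<^sup>2)"
proof -
  have "(\<Sum>a\<in>I. \<Sum>a'\<in>I. \<Sum>b\<in>I. \<Sum>b'\<in>I. d a b * d a' b' * of_bool (b = b'))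
      = (\<Sum>a\<in>I. \<Sum>a'\<in>I. \<Sum>b\<in>I. \<Sum>b'\<in>I. if b = b' then d a b * d a' b' else 0)"
    by (intro sum.cong refl) simp
  also have "\<dots> = (\<Sum>a\<in>I. \<Sum>a'\<in>I. \<Sum>b\<in>I. d a b * d a' b)"
    using assms by (simp add: sum.delta' cong: sum.cong)
  also have "\<dots> = (\<Sum>a\<in>I. \<Sum>b\<in>I. \<Sum>a'\<in>I. d a b * d a' b)"
    by (intro sum.cong refl sum.swap)
  also have "\<dots> = (\<Sum>b\<in>I. (\<Sum>a\<in>I. d a b)\<^sup>2)"
    by (subst sum.swap) (simp add: power2_eq_square sum_product)
  finally show ?thesis .
qed

lemma pair_sum_same_entry:
  fixes d :: "'x \<Rightarrow> 'x \<Rightarrow> real" assumes "finite I"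
  shows "(\<Sum>a\<in>I. \<Sum>a'\<in>I. \<Sum>b\<in>I. \<Sum>b'\<in>I. d a b * d a' b' * (of_bool (a = a') * of_bool (b = b')))
      = (\<Sum>a\<in>I. \<Sum>b\<in>I. (d a b)\<^sup>2)"
proof -
  have "(\<Sum>a\<in>I. \<Sum>a'\<in>I. \<Sum>b\<in>I. \<Sum>b'\<in>I. d a b * d a' b' * (of_bool (a = a') * of_bool (b = b')))
      = (\<Sum>a\<in>I. \<Sum>a'\<in>I. if a = a' then \<Sum>b\<in>I. \<Sum>b'\<in>I. if b = b' then d a b * d a' b' else 0 else 0)"
    by (intro sum.cong refl) (auto intro!: sum.cong)
  also have "\<dots> = (\<Sum>a\<in>I. \<Sum>b\<in>I. (d a b)\<^sup>2)"
    using assms by (simp add: sum.delta' power2_eq_square cong: sum.cong)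
  finally show ?thesis .
qed

lemma tensor_quadratic_form_const_plus_diag:
  fixes d :: "'x \<Rightarrow> 'x \<Rightarrow> real" and c s :: real
  assumes "finite I"
  shows "(\<Sum>a\<in>I. \<Sum>a'\<in>I. \<Sum>b\<in>I. \<Sum>b'\<in>I.
            d a b * d a' b' * (c + s * of_bool (a = a')) * (c + s * of_bool (b = b')))
    = c\<^sup>2 * (\<Sum>a\<in>I. \<Sum>b\<in>I. d a b)\<^sup>2
      + c * s * ((\<Sum>a\<in>I. (\<Sum>b\<in>I. d a b)\<^sup>2) + (\<Sum>b\<in>I. (\<Sum>a\<in>I. d a b)\<^sup>2))
      + s\<^sup>2 * (\<Sum>a\<in>I. \<Sum>b\<in>I. (d a b)\<^sup>2)"
proof -
  have all_pairs: "(\<Sum>a\<in>I. \<Sum>a'\<in>I. \<Sum>b\<in>I. \<Sum>b'\<in>I. d a b * d a' b') = (\<Sum>a\<in>I. \<Sum>b\<in>I. d a b)\<^sup>2"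
    by (simp add: power2_eq_square sum_product)
  have "(\<Sum>a\<in>I. \<Sum>a'\<in>I. \<Sum>b\<in>I. \<Sum>b'\<in>I.
            d a b * d a' b' * (c + s * of_bool (a = a')) * (c + s * of_bool (b = b')))
    = (\<Sum>a\<in>I. \<Sum>a'\<in>I. \<Sum>b\<in>I. \<Sum>b'\<in>I. c\<^sup>2 * (d a b * d a' b')
         + c * s * (d a b * d a' b' * of_bool (a = a')) + c * s * (d a b * d a' b' * of_bool (b = b'))
         + s\<^sup>2 * (d a b * d a' b' * (of_bool (a = a') * of_bool (b = b'))))"
    by (intro sum.cong refl) (simp add: algebra_simps power2_eq_square)
  also have "\<dots> = c\<^sup>2 * (\<Sum>a\<in>I. \<Sum>b\<in>I. d a b)\<^sup>2
      + c * s * ((\<Sum>a\<in>I. (\<Sum>b\<in>I. d a b)\<^sup>2) + (\<Sum>b\<in>I. (\<Sum>a\<in>I. d a b)\<^sup>2))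
      + s\<^sup>2 * (\<Sum>a\<in>I. \<Sum>b\<in>I. (d a b)\<^sup>2)"
    by (simp only: sum.distrib all_pairs pair_sum_same_row[OF assms] pair_sum_same_column[OF assms]
        pair_sum_same_entry[OF assms] flip: sum_distrib_left[of "c\<^sup>2"] sum_distrib_left[of "c * s"]
        sum_distrib_left[of "s\<^sup>2"]) (simp add: algebra_simps)
  finally show ?thesis .
qed

lemma l2sq_nonneg: "0 \<le> l2sq A f g"
  by (simp add: l2sq_def sum_nonneg)

lemma dTV_le_l2dist: "2 * dTV A p q \<le> sqrt (card A) * l2dist A p q"
proof -
  have "(\<Sum>a\<in>A. \<bar>p a - q a\<bar>)\<^sup>2 \<le> l2sq A p q * card A"
    using sum_squared_le_sum_of_squares[of "\<lambda>a. \<bar>p a - q a\<bar>" A] by (simp add: l2sq_def)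
  then have "(\<Sum>a\<in>A. \<bar>p a - q a\<bar>) \<le> sqrt (l2sq A p q * card A)"
    by (simp add: real_le_rsqrt)
  then show ?thesis
    by (simp add: dTV_def l2dist_def real_sqrt_mult mult.commute)
qed

lemma sylv0_cases: "sylv0 m i j = 1 \<or> sylv0 m i j = -1"
  by (induction m arbitrary: i j) (auto simp: Let_def)

lemma sylv0_0_left [simp]: "sylv0 m 0 j = 1"
  by (induction m arbitrary: j) (auto simp: Let_def)

lemma sylv0_orthogonal:
  assumes "a < 2 ^ m" "b < 2 ^ m"
  shows "(\<Sum>z<2 ^ m. sylv0 m a z * sylv0 m b z) = (if a = b then 2 ^ m else 0)"
  using assms
proof (induction m arbitrary: a b)
  case 0
  then show ?case by simp
next
  case (Suc m)
  define h :: nat where "h = 2 ^ m"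
  define low where "low x = (if x < h then x else x - h)" for x
  define sign where "sign x = (if x < h then 1 else -1 :: int)" for x
  have left_half: "sylv0 (Suc m) x z = sylv0 m (low x) z" if "z < h" for x z
    using that by (simp add: Let_def h_def low_def)
  have right_half: "sylv0 (Suc m) x (z + h) = sign x * sylv0 m (low x) z" if "z < h" for x z
    using that by (simp add: Let_def h_def low_def sign_def)
  have "(\<Sum>z<2 ^ Suc m. sylv0 (Suc m) a z * sylv0 (Suc m) b z)
      = (\<Sum>z<h. sylv0 (Suc m) a z * sylv0 (Suc m) b z)
        + (\<Sum>z<h. sylv0 (Suc m) a (z + h) * sylv0 (Suc m) b (z + h))"
    by (simp only: h_def power_Suc sum_lessThan_double)
  also have "\<dots> = (\<Sum>z<h. sylv0 m (low a) z * sylv0 m (low b) z)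
        + (\<Sum>z<h. sign a * sign b * (sylv0 m (low a) z * sylv0 m (low b) z))"
    by (intro arg_cong2[where f = "(+)"] sum.cong) (simp_all add: left_half right_half del: sylv0.simps)
  also have "\<dots> = (1 + sign a * sign b) * (\<Sum>z<h. sylv0 m (low a) z * sylv0 m (low b) z)"
    by (simp add: sum_distrib_left sum.distrib algebra_simps)
  also have "\<dots> = (1 + sign a * sign b) * (if low a = low b then h else 0)"
    using Suc by (simp add: h_def low_def)
  also have "\<dots> = (if a = b then 2 ^ Suc m else 0)"
    using Suc.prems by (auto simp: low_def sign_def h_def)
  finally show ?case .
qed

lemma hadamard_cases: "hadamard m i z = 1 \<or> hadamard m i z = -1"
  by (simp add: hadamard_def sylv0_cases)

lemma hadamard_orthogonal:
  assumes "i \<in> {1..2 ^ m}" "j \<in> {1..2 ^ m}"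
  shows "(\<Sum>z\<in>{1..2 ^ m}. real_of_int (hadamard m i z) * real_of_int (hadamard m j z))
    = (if i = j then 2 ^ m else 0)"
proof -
  have "(\<Sum>z\<in>{1..2 ^ m}. real_of_int (hadamard m i z) * real_of_int (hadamard m j z))
      = real_of_int (\<Sum>z<2 ^ m. sylv0 m (i - 1) z * sylv0 m (j - 1) z)"
    by (simp add: sum.atLeast1_atMost_eq[where n = "2 ^ m", simplified] hadamard_def)
  also have "\<dots> = (if i = j then 2 ^ m else 0)"
    using assms by (subst sylv0_orthogonal) auto
  finally show ?thesis .
qed

lemma hadamard_row_sum:
  assumes "i \<in> {2..2 ^ m}"
  shows "(\<Sum>z\<in>{1..2 ^ m}. real_of_int (hadamard m i z)) = 0"
  using hadamard_orthogonal[of i m 1] assms by (simp add: hadamard_def)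

lemma alpha_H_pos: "eps > 0 \<Longrightarrow> alpha_H eps > 0"
  by (simp add: alpha_H_def add_pos_pos)

lemma HR_W_eq:
  assumes "z \<in> {1..HR_K k}"
  shows "HR_W k eps \<phi> z x
    = 1 / real (HR_K k) + alpha_H eps / real (HR_K k) * real_of_int (hadamard (HR_exp k) (\<phi> x) z)"
proof -
  define K where "K = real (HR_K k)"
  define e where "e = exp eps"
  have "K > 0" "e + 1 > 0" by (simp_all add: K_def HR_K_def e_def add_pos_pos)
  then have "2 / K * (e / (e + 1)) = 1 / K + (e - 1) / (e + 1) / K"
    and "2 / K * (1 / (e + 1)) = 1 / K - (e - 1) / (e + 1) / K"
    by (simp_all add: divide_simps)
  then show ?thesis
    using hadamard_cases[of "HR_exp k" "\<phi> x" z] assms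
    by (auto simp: HR_W_def HR_C_def alpha_H_def K_def e_def minus_divide_left)
qed

lemma HR_W_gram:
  assumes "inj_on \<phi> I" "\<phi> ` I \<subseteq> {2..HR_K k}" "a \<in> I" "b \<in> I"
  shows "(\<Sum>z\<in>{1..HR_K k}. HR_W k eps \<phi> z a * HR_W k eps \<phi> z b)
    = 1 / real (HR_K k) + (alpha_H eps)\<^sup>2 / real (HR_K k) * of_bool (a = b)"
proof -
  define K where "K = real (HR_K k)"
  define \<alpha> where "\<alpha> = alpha_H eps"
  define h where "h x z = real_of_int (hadamard (HR_exp k) (\<phi> x) z)" for x z
  have K: "HR_K k = 2 ^ HR_exp k" by (simp add: HR_K_def)
  have row: "\<phi> x \<in> {2..2 ^ HR_exp k}" if "x \<in> I" for x
    using assms(2) that K by auto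
  have "(\<Sum>z\<in>{1..HR_K k}. HR_W k eps \<phi> z a * HR_W k eps \<phi> z b)
      = (\<Sum>z\<in>{1..HR_K k}. 1 / K\<^sup>2 + \<alpha> / K\<^sup>2 * h a z + \<alpha> / K\<^sup>2 * h b z + \<alpha>\<^sup>2 / K\<^sup>2 * (h a z * h b z))"
    by (intro sum.cong refl) (simp add: HR_W_eq K_def \<alpha>_def h_def power2_eq_square field_simps)
  also have "\<dots> = K / K\<^sup>2 + \<alpha> / K\<^sup>2 * (\<Sum>z\<in>{1..HR_K k}. h a z) + \<alpha> / K\<^sup>2 * (\<Sum>z\<in>{1..HR_K k}. h b z)
      + \<alpha>\<^sup>2 / K\<^sup>2 * (\<Sum>z\<in>{1..HR_K k}. h a z * h b z)"
    by (simp add: sum.distrib sum_distrib_left K_def)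
  also have "\<dots> = 1 / K + \<alpha>\<^sup>2 / K * of_bool (a = b)"
    using hadamard_row_sum[OF row[OF assms(3)]] hadamard_row_sum[OF row[OF assms(4)]]
      hadamard_orthogonal[of "\<phi> a" "HR_exp k" "\<phi> b"] row[OF assms(3)] row[OF assms(4)]
      inj_onD[OF assms(1) _ assms(3,4)]
    by (auto simp: h_def K K_def power2_eq_square)
  finally show ?thesis by (simp add: K_def \<alpha>_def)
qed

lemma HR_T_l2sq:
  assumes "inj_on \<phi> {1..k}" "\<phi> ` {1..k} \<subseteq> {2..HR_K k}"
    and "(\<Sum>x\<in>{1..k} \<times> {1..k}. p x) = (\<Sum>x\<in>{1..k} \<times> {1..k}. q x)"
  shows "l2sq ({1..HR_K k} \<times> {1..HR_K k}) (HR_T k eps \<phi> p) (HR_T k eps \<phi> q)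
     = alpha_H eps ^ 4 / real (HR_K k) ^ 2 * l2sq ({1..k} \<times> {1..k}) p q
       + alpha_H eps ^ 2 / real (HR_K k) ^ 2
           * (l2sq {1..k} (marg1 k p) (marg1 k q) + l2sq {1..k} (marg2 k p) (marg2 k q))"
proof -
  define I J K \<alpha> where "I = {1..k}" and "J = {1..HR_K k}" and "K = real (HR_K k)"
    and "\<alpha> = alpha_H eps"
  define W where "W z x = HR_W k eps \<phi> z x" for z x
  define d where "d a b = p (a, b) - q (a, b)" for a b
  have finite_I: "finite I" by (simp add: I_def)
  have image_diff: "HR_T k eps \<phi> p (z1, z2) - HR_T k eps \<phi> q (z1, z2)
      = (\<Sum>a\<in>I. \<Sum>b\<in>I. W z1 a * W z2 b * d a b)" for z1 z2
    unfolding HR_T_def I_def W_def d_def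
    by (simp add: sum.cartesian_product[symmetric] sum_subtractf[symmetric] right_diff_distrib)
  have mass: "(\<Sum>a\<in>I. \<Sum>b\<in>I. d a b) = 0"
    using assms(3) by (simp add: d_def I_def sum.cartesian_product sum_subtractf)
  have entries: "l2sq (I \<times> I) p q = (\<Sum>a\<in>I. \<Sum>b\<in>I. (d a b)\<^sup>2)"
    by (simp add: l2sq_def d_def sum.cartesian_product)
  have rows: "l2sq I (marg1 k p) (marg1 k q) = (\<Sum>a\<in>I. (\<Sum>b\<in>I. d a b)\<^sup>2)"
    by (simp add: l2sq_def marg1_def d_def I_def sum_subtractf)
  have columns: "l2sq I (marg2 k p) (marg2 k q) = (\<Sum>b\<in>I. (\<Sum>a\<in>I. d a b)\<^sup>2)"
    by (simp add: l2sq_def marg2_def d_def I_def sum_subtractf)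
  have gram: "(\<Sum>z\<in>J. W z a * W z b) = 1 / K + \<alpha>\<^sup>2 / K * of_bool (a = b)" if "a \<in> I" "b \<in> I" for a b
    using HR_W_gram[OF assms(1,2)] that by (simp add: I_def J_def K_def \<alpha>_def W_def)
  have "l2sq (J \<times> J) (HR_T k eps \<phi> p) (HR_T k eps \<phi> q)
      = (\<Sum>z1\<in>J. \<Sum>z2\<in>J. (HR_T k eps \<phi> p (z1, z2) - HR_T k eps \<phi> q (z1, z2))\<^sup>2)"
    by (simp add: l2sq_def sum.cartesian_product split_def)
  also have "\<dots> = (\<Sum>z1\<in>J. \<Sum>z2\<in>J. (\<Sum>a\<in>I. \<Sum>b\<in>I. W z1 a * W z2 b * d a b)\<^sup>2)"
    by (simp only: image_diff)
  also have "\<dots> = (\<Sum>a\<in>I. \<Sum>a'\<in>I. \<Sum>b\<in>I. \<Sum>b'\<in>I. d a b * d a' b'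
      * (1 / K + \<alpha>\<^sup>2 / K * of_bool (a = a')) * (1 / K + \<alpha>\<^sup>2 / K * of_bool (b = b')))"
    unfolding sum_sq_tensor_image by (intro sum.cong refl) (simp add: gram)
  also have "\<dots> = (\<alpha>\<^sup>2 / K)\<^sup>2 * (\<Sum>a\<in>I. \<Sum>b\<in>I. (d a b)\<^sup>2)
      + 1 / K * (\<alpha>\<^sup>2 / K) * ((\<Sum>a\<in>I. (\<Sum>b\<in>I. d a b)\<^sup>2) + (\<Sum>b\<in>I. (\<Sum>a\<in>I. d a b)\<^sup>2))"
    by (subst tensor_quadratic_form_const_plus_diag[OF finite_I]) (simp add: mass)
  also have "\<dots> = \<alpha> ^ 4 / K ^ 2 * l2sq (I \<times> I) p q
      + \<alpha> ^ 2 / K ^ 2 * (l2sq I (marg1 k p) (marg1 k q) + l2sq I (marg2 k p) (marg2 k q))"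
    unfolding entries rows columns by (simp add: power_divide eval_nat_numeral field_simps)
  finally show ?thesis by (simp add: I_def J_def K_def \<alpha>_def)
qed

lemma HR_T_l2dist_ge:
  assumes "inj_on \<phi> {1..k}" "\<phi> ` {1..k} \<subseteq> {2..HR_K k}"
    and "(\<Sum>x\<in>{1..k} \<times> {1..k}. p x) = (\<Sum>x\<in>{1..k} \<times> {1..k}. q x)"
  shows "alpha_H eps ^ 2 / real (HR_K k) * l2dist ({1..k} \<times> {1..k}) p q
    \<le> l2dist ({1..HR_K k} \<times> {1..HR_K k}) (HR_T k eps \<phi> p) (HR_T k eps \<phi> q)"
proof -
  have "(alpha_H eps ^ 2 / real (HR_K k) * l2dist ({1..k} \<times> {1..k}) p q)\<^sup>2
      \<le> l2sq ({1..HR_K k} \<times> {1..HR_K k}) (HR_T k eps \<phi> p) (HR_T k eps \<phi> q)"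
    unfolding HR_T_l2sq[OF assms] l2dist_def
    by (simp add: power_mult_distrib power_divide l2sq_nonneg flip: power_mult)
  then show ?thesis
    by (simp add: l2dist_def real_le_rsqrt)
qed

theorem lemma6p4:
  fixes k :: nat and eps :: real and \<phi> :: "nat \<Rightarrow> nat"
    and p q :: "nat \<times> nat \<Rightarrow> real"
  assumes "k \<ge> 1" and "eps > 0"
    and "inj_on \<phi> {1..k}" and "\<phi> ` {1..k} \<subseteq> {2..HR_K k}"
    and "is_dist ({1..k} \<times> {1..k}) p" and "is_dist ({1..k} \<times> {1..k}) q"
  shows "(l2sq ({1..HR_K k} \<times> {1..HR_K k}) (HR_T k eps \<phi> p) (HR_T k eps \<phi> q)
           = alpha_H eps ^ 4 / real (HR_K k) ^ 2 * l2sq ({1..k} \<times> {1..k}) p q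
             + alpha_H eps ^ 2 / real (HR_K k) ^ 2
                 * (l2sq {1..k} (marg1 k p) (marg1 k q) + l2sq {1..k} (marg2 k p) (marg2 k q)))
         \<and> (\<forall>\<gamma>::real. dTV ({1..k} \<times> {1..k}) p q > \<gamma> \<longrightarrow>
           l2dist ({1..HR_K k} \<times> {1..HR_K k}) (HR_T k eps \<phi> p) (HR_T k eps \<phi> q)
             > 2 * alpha_H eps ^ 2 * \<gamma> / (real (HR_K k) * real k))"
proof -
  let ?I = "{1..k} \<times> {1..k}" and ?J = "{1..HR_K k} \<times> {1..HR_K k}"
  let ?c = "alpha_H eps ^ 2 / real (HR_K k)"
  have mass: "(\<Sum>x\<in>?I. p x) = (\<Sum>x\<in>?I. q x)"
    using assms(5,6) by (simp add: is_dist_def)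
  have upper: "2 * dTV ?I p q \<le> real k * l2dist ?I p q"
    using dTV_le_l2dist[of ?I p q] by (simp add: card_cartesian_product)
  have "?c > 0" "real k > 0"
    using alpha_H_pos[OF assms(2)] assms(1) by (simp_all add: HR_K_def)
  have "2 * alpha_H eps ^ 2 * \<gamma> / (real (HR_K k) * real k)
      < l2dist ?J (HR_T k eps \<phi> p) (HR_T k eps \<phi> q)" if "dTV ?I p q > \<gamma>" for \<gamma>
  proof -
    have "2 * alpha_H eps ^ 2 * \<gamma> / (real (HR_K k) * real k) = ?c * (2 * \<gamma> / real k)"
      by simp
    also have "\<dots> < ?c * l2dist ?I p q"
      using that upper \<open>real k > 0\<close>
      by (intro mult_strict_left_mono \<open>?c > 0\<close>) (simp add: divide_less_eq mult.commute)
    also have "\<dots> \<le> l2dist ?J (HR_T k eps \<phi> p) (HR_T k eps \<phi> q)"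
      by (rule HR_T_l2dist_ge[OF assms(3,4) mass])
    finally show ?thesis .
  qed
  with HR_T_l2sq[OF assms(3,4) mass] show ?thesis by blast
qed

end
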